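(* Let $n\geq 5$ be an odd prime and $q=2^f$ for some positive integer $f$. If $P_q^n=\{r\}$, then $r\geq 4nf+1$.
   Context: For integers $x\geq 2$ and $m\geq 1$, $P_x^m$ denotes the set of primitive prime divisors of $x^m-1$, i.e. primes dividing $x^m-1$ but not dividing $x^i-1$ for any $1\leq i<m$. *)

theory Defs
  imports "HOL-Computational_Algebra.Primes"
begin

definition ppd :: "nat \<Rightarrow> nat \<Rightarrow> nat set" where
  "ppd x m = {p. prime p \<and> p dvd (x ^ m - 1) \<and> (\<forall>i. 1 \<le> i \<and> i < m \<longrightarrow> \<not> p dvd (x ^ i - 1))}"

end

theory Submission
  imports Defs "HOL-Number_Theory.Number_Theory"
begin

(* Let q = 2^f and Phi(x) = 1 + x + ... + x^(n-1). As n is prime, the primitive prime divisors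
   of q^n - 1 are the prime divisors of Phi(q) other than n, and n^2 never divides Phi(q); so a
   unique primitive divisor r gives Phi(q) = r^a or n r^a. If a prime p other than n divided f,
   write q = u^p: then r is also the primitive divisor of u^n - 1, and the identity
   Phi(u^p) (1 + u + ... + u^(p-1)) = Phi(u) (1 + u^n + ... + u^(n(p-1))), whose last factor is
   congruent to p modulo r, puts almost all of r^a into the far smaller Phi(u). Hence f = n^j, the
   order of 2 modulo r is n^(j+1) = nf, and 2nf divides r - 1. It remains to exclude r = 2nf + 1:
   for f = 1 because 2^n - 1 = r^a forces r + 1 to be a power of 2 below 2^n, for f = n because 3
   divides 2n^2 + 1, and for f >= n^2 because 2^f divides r^a - 1 = Phi(q) - 1, which by lifting
   the exponent makes a too large for r^a < 2^(nf). *)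

section \<open>Geometric sums and divisors of x^m - 1\<close>

lemma power_diff_1_eq_nat: "(x::nat) ^ m - 1 = (x - 1) * (\<Sum>i<m. x ^ i)"
proof (cases "x = 0")
  case True
  then show ?thesis by (cases m) auto
next
  case False
  have "int (x ^ m - 1) = int x ^ m - 1"
    using False by (simp add: of_nat_diff)
  also have "\<dots> = (int x - 1) * (\<Sum>i<m. int x ^ i)"
    by (rule power_diff_1_eq)
  also have "\<dots> = int ((x - 1) * (\<Sum>i<m. x ^ i))"
    using False by (simp add: of_nat_diff)
  finally show ?thesis by linarith
qed

lemma power_diff_1_dvd:
  assumes "a dvd b"
  shows "(x::nat) ^ a - 1 dvd x ^ b - 1"
proof -
  obtain k where "b = a * k" using assms by blast
  then have "x ^ b - 1 = (x ^ a - 1) * (\<Sum>i<k. (x ^ a) ^ i)"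
    using power_diff_1_eq_nat[of "x ^ a" k] by (simp only: power_mult)
  then show ?thesis by simp
qed

lemma dvd_power_diff_1_gcd:
  assumes "s dvd (x::nat) ^ a - 1" "s dvd x ^ b - 1"
  shows "s dvd x ^ gcd a b - 1"
proof (cases "x = 0")
  case False
  then have one_le: "1 \<le> x ^ k" for k by simp
  have "[x ^ a = 1] (mod s)" "[x ^ b = 1] (mod s)"
    using assms cong_altdef_nat[OF one_le] by blast+
  then have "ord s x dvd a" "ord s x dvd b"
    using ord_divides by blast+
  then have "ord s x dvd gcd a b"
    by simp
  then show ?thesis
    using cong_altdef_nat[OF one_le] ord_divides by blast
qed (simp add: power_0_left)

lemma geometric_sum_cong:
  assumes "[x = 1] (mod s)"
  shows "[(\<Sum>i<m. x ^ i) = m] (mod s)"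
proof -
  have "[(\<Sum>i<m. x ^ i) = (\<Sum>i<m. 1)] (mod s)"
    using assms by (intro cong_sum) (metis cong_pow power_one)
  then show ?thesis by simp
qed

lemma geometric_sum_less:
  assumes "2 \<le> (x::nat)" "1 \<le> n"
  shows "(\<Sum>i<n. x ^ i) < 2 * x ^ (n - 1)"
proof -
  have "(x - 1) * (\<Sum>i<n. x ^ i) = x ^ n - 1"
    by (rule power_diff_1_eq_nat[symmetric])
  also have "\<dots> < x ^ n"
    using assms by simp
  also have "x ^ n = x * x ^ (n - 1)"
    using assms by (simp add: power_eq_if)
  also have "\<dots> \<le> (x - 1) * (2 * x ^ (n - 1))"
    using assms by (simp add: mult.assoc[symmetric])
  finally show ?thesis by simp
qed

lemma geometric_sum_less_power:
  assumes "2 \<le> (x::nat)" "0 < n"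
  shows "(\<Sum>i<n. x ^ i) < x ^ n"
proof -
  have "(\<Sum>i<n. x ^ i) < 2 * x ^ (n - 1)"
    using assms by (intro geometric_sum_less) simp_all
  also have "\<dots> \<le> x * x ^ (n - 1)"
    using assms(1) by simp
  also have "\<dots> = x ^ n"
    using assms(2) by (simp add: power_eq_if)
  finally show ?thesis .
qed

lemma geometric_sum_dvd_diff_1:
  assumes "0 < n"
  shows "(x::nat) dvd (\<Sum>i<n. x ^ i) - 1"
proof -
  obtain m where n: "n = Suc m"
    using assms by (cases n) auto
  have "(\<Sum>i<n. x ^ i) = 1 + x * (\<Sum>i<m. x ^ i)"
    unfolding n sum.lessThan_Suc_shift by (simp add: sum_distrib_left)
  then show ?thesis
    by simp
qed

lemma geometric_sum_pos: "0 < x \<Longrightarrow> 0 < n \<Longrightarrow> 0 < (\<Sum>i<n. (x::nat) ^ i)"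
  by (intro sum_pos) auto

lemma odd_geometric_sum_iff: "odd (x::nat) \<Longrightarrow> odd (\<Sum>i<a. x ^ i) \<longleftrightarrow> odd a"
  by (induction a) auto

lemma power_cong_linear: "[(1 + w) ^ i = 1 + i * w] (mod w^2)" for w :: nat
proof (induction i)
  case (Suc i)
  have "[(1 + w) ^ Suc i = (1 + i * w) * (1 + w)] (mod w^2)"
    using cong_mult[OF Suc.IH cong_refl[of "1 + w"]] by (simp add: mult.commute)
  also have "(1 + i * w) * (1 + w) = (1 + Suc i * w) + i * w^2"
    by (simp add: algebra_simps power2_eq_square)
  also have "[\<dots> = 1 + Suc i * w] (mod w^2)"
    by (simp add: cong_def)
  finally show ?case .
qed simp

text \<open>Modulo \<open>p\<^sup>2\<close> the sum \<open>\<Sum>i<p. (1 + w)\<^sup>i\<close> with \<open>p dvd w\<close> is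
  \<open>p + w p (p - 1) / 2 \<equiv> p\<close>.\<close>
lemma prime_square_not_dvd_geometric_sum:
  assumes "prime p" "odd p" "[x = 1] (mod p)"
  shows "\<not> p^2 dvd (\<Sum>i<p. x ^ i)"
proof
  assume dvd: "p^2 dvd (\<Sum>i<p. x ^ i)"
  have "x \<noteq> 0"
  proof
    assume "x = 0"
    then show False
      using assms prime_gt_1_nat[of p] by (simp add: cong_def)
  qed
  define w where "w = x - 1"
  have x: "x = 1 + w" using \<open>x \<noteq> 0\<close> by (simp add: w_def)
  have "p dvd w"
    using assms(3) \<open>x \<noteq> 0\<close> by (simp add: w_def cong_altdef_nat)
  then obtain c where w: "w = p * c" by blast
  obtain t where t: "p = Suc (2 * t)"
    using assms(2) by (metis oddE Suc_eq_plus1)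
  have "2 * (\<Sum>i=0..2*t. i) = 2 * t * (2 * t + 1)"
    using double_gauss_sum[of "2 * t", where 'a = nat] by simp
  then have gauss: "(\<Sum>i<p. i) = t * p"
    by (simp add: t atLeast0AtMost lessThan_Suc_atMost)
  have "p^2 dvd w^2" using w by (simp add: power_mult_distrib)
  then have "[(\<Sum>i<p. x ^ i) = (\<Sum>i<p. 1 + i * w)] (mod p^2)"
    unfolding x by (intro cong_sum cong_dvd_modulus_nat[OF power_cong_linear])
  also have "(\<Sum>i<p. 1 + i * w) = p + w * (\<Sum>i<p. i)"
    by (simp only: sum.distrib sum_distrib_right[symmetric]) (simp add: mult.commute)
  also have "\<dots> = p + p^2 * (c * t)"
    by (simp add: gauss w power2_eq_square)
  also have "[\<dots> = p] (mod p^2)"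
    by (simp add: cong_def)
  finally have "p^2 dvd p"
    using dvd by (simp add: cong_dvd_iff)
  then have "p * p dvd p * 1" by (simp add: power2_eq_square)
  then show False
    using assms(1) by (simp add: prime_gt_0_nat)
qed

lemma odd_square_cong_1_mod_4: "odd (x::nat) \<Longrightarrow> [x^2 = 1] (mod 4)"
  using square_mod_8_eq_1_iff[of x] cong_dvd_modulus_nat[of "x^2" 1 8 4] by simp

lemma two_power_dvd_power_diff_1_cong_1_mod_4:
  assumes "[y = 1] (mod 4)" "2 ^ k dvd y ^ b - 1"
  shows "2 ^ k dvd (y - 1) * (b::nat)"
  using assms(2)
proof (induction b arbitrary: k rule: less_induct)
  case (less b)
  have "odd y"
    using assms(1) by (simp add: cong_def) presburger
  show ?case
  proof (cases "odd b")
    case True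
    have "coprime (2 ^ k) (\<Sum>i<b. y ^ i)"
      using True \<open>odd y\<close> by (simp add: odd_geometric_sum_iff)
    moreover have "2 ^ k dvd (y - 1) * (\<Sum>i<b. y ^ i)"
      using less.prems by (simp only: power_diff_1_eq_nat)
    ultimately have "2 ^ k dvd y - 1"
      by (simp add: coprime_dvd_mult_left_iff)
    then show ?thesis by simp
  next
    case False
    then obtain c where b: "b = 2 * c" by blast
    show ?thesis
    proof (cases "c = 0 \<or> k = 0")
      case True
      then show ?thesis using b by auto
    next
      case False
      then obtain k' where k: "k = Suc k'" by (cases k) auto
      have "[y ^ c = 1] (mod 4)"
        using cong_pow[OF assms(1)] by simp
      then have "(y ^ c + 1) mod 4 = 2"
        by (simp add: cong_def) presburger
      moreover define t where "t = (y ^ c + 1) div 2"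
      ultimately have t: "y ^ c + 1 = 2 * t" "odd t"
        by presburger+
      have "y ^ b - 1 = (y ^ c - 1) * (y ^ c + 1)"
        using power_diff_1_eq_nat[of "y ^ c" 2] by (simp add: b power_add mult_2 numeral_2_eq_2)
      then have "y ^ b - 1 = 2 * ((y ^ c - 1) * t)"
        by (simp only: t(1) mult.left_commute)
      then have "2 * 2 ^ k' dvd 2 * ((y ^ c - 1) * t)"
        using less.prems by (simp only: k power_Suc)
      then have "2 ^ k' dvd y ^ c - 1"
        using t(2) by (simp add: coprime_dvd_mult_left_iff)
      then have "2 ^ k' dvd (y - 1) * c"
        using less.IH[of c k'] b False by simp
      then show ?thesis
        by (simp add: b k mult.left_commute)
    qed
  qed
qed

text \<open>The case \<open>p = 2\<close> of the lifting-the-exponent lemma, as a divisibility.\<close>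
lemma two_power_dvd_power_diff_1:
  assumes "odd (x::nat)" "2 ^ k dvd x ^ a - 1"
  shows "2 ^ k dvd (x^2 - 1) * a"
proof (cases "odd a")
  case True
  have "coprime (2 ^ k) (\<Sum>i<a. x ^ i)"
    using True assms(1) by (simp add: odd_geometric_sum_iff)
  moreover have "2 ^ k dvd (x - 1) * (\<Sum>i<a. x ^ i)"
    using assms(2) by (simp only: power_diff_1_eq_nat)
  ultimately have "2 ^ k dvd x - 1"
    by (simp add: coprime_dvd_mult_left_iff)
  moreover have "x - 1 dvd x^2 - 1"
    using power_diff_1_dvd[of 1 2 x] by simp
  ultimately show ?thesis
    by (simp add: dvd_mult2 dvd_trans)
next
  case False
  then obtain b where b: "a = 2 * b" by blast
  have "2 ^ k dvd (x^2) ^ b - 1"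
    using assms(2) by (simp add: b power_mult)
  then have "2 ^ k dvd (x^2 - 1) * b"
    using two_power_dvd_power_diff_1_cong_1_mod_4 odd_square_cong_1_mod_4[OF assms(1)] by blast
  then show ?thesis
    by (simp add: b dvd_mult mult.left_commute)
qed

section \<open>Primitive prime divisors for a prime exponent\<close>

lemma cong_power_prime_power_self:
  assumes "prime p"
  shows "[x ^ (p ^ j) = x] (mod p)"
proof (induction j)
  case (Suc j)
  have "[x ^ p = x] (mod p)" for x
  proof (cases "p dvd x")
    case True
    have "x ^ p mod p = (x mod p) ^ p mod p"
      by (simp add: power_mod)
    then show ?thesis
      using True prime_gt_0_nat[OF assms] by (simp add: cong_def power_0_left)
  next
    case False
    then have "[x ^ (p - 1) * x = 1 * x] (mod p)"
      using fermat_theorem[OF assms] cong_scalar_right by blast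
    then show ?thesis
      using assms by (simp add: power_Suc2[symmetric] prime_gt_0_nat)
  qed
  then have "[(x ^ (p ^ j)) ^ p = x ^ (p ^ j)] (mod p)" .
  then show ?case
    using Suc.IH by (simp add: power_mult[symmetric] mult.commute cong_trans)
qed simp

lemma eq_power_multiplicity_of_prime_divisors:
  assumes "prime (p::nat)" "0 < m" "\<And>s. prime s \<Longrightarrow> s dvd m \<Longrightarrow> s = p"
  shows "m = p ^ multiplicity p m"
proof -
  have "m \<noteq> 0" "\<not> is_unit p"
    using assms(1,2) by auto
  then obtain y where y: "m = p ^ multiplicity p m * y" "\<not> p dvd y"
    by (rule multiplicity_decompose')
  have "y = 1"
  proof (rule ccontr)
    assume "y \<noteq> 1"
    then obtain s where "prime s" "s dvd y"
      using prime_factor_nat by blast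
    then show False
      using assms(3)[of s] y by (metis dvd_mult)
  qed
  then show ?thesis
    using y by simp
qed

lemma dvd_prime_of_prime_divisors:
  assumes "prime (p::nat)" "0 < m" "\<And>s. prime s \<Longrightarrow> s dvd m \<Longrightarrow> s = p" "\<not> p^2 dvd m"
  shows "m dvd p"
proof -
  have m: "m = p ^ multiplicity p m"
    by (rule eq_power_multiplicity_of_prime_divisors[OF assms(1-3)])
  then have "multiplicity p m \<le> 1"
    using assms(4) le_imp_power_dvd[of 2 "multiplicity p m" p] by fastforce
  then show ?thesis
    by (subst m) (simp add: le_imp_power_dvd[of _ 1, simplified])
qed

lemma ppd_prime_iff:
  assumes "prime n"
  shows "s \<in> ppd x n \<longleftrightarrow> prime s \<and> s dvd x ^ n - 1 \<and> \<not> s dvd x - 1"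
proof
  assume s: "s \<in> ppd x n"
  have "\<not> s dvd x ^ 1 - 1"
    using s prime_gt_1_nat[OF assms] unfolding ppd_def by blast
  then show "prime s \<and> s dvd x ^ n - 1 \<and> \<not> s dvd x - 1"
    using s unfolding ppd_def by simp
next
  assume s: "prime s \<and> s dvd x ^ n - 1 \<and> \<not> s dvd x - 1"
  have "\<not> s dvd x ^ i - 1" if "1 \<le> i" "i < n" for i
  proof
    assume "s dvd x ^ i - 1"
    then have "s dvd x ^ gcd i n - 1"
      using s dvd_power_diff_1_gcd by blast
    moreover have "\<not> n dvd i"
      using that by (auto dest: dvd_imp_le)
    then have "coprime i n"
      using prime_imp_coprime[OF assms] coprime_commute by blast
    ultimately show False
      using s by simp
  qed
  then show "s \<in> ppd x n"
    using s unfolding ppd_def by blast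
qed

lemma two_notin_ppd:
  assumes "2 \<le> m"
  shows "2 \<notin> ppd x m"
proof
  assume "2 \<in> ppd x m"
  then have "even (x ^ m - 1)" "odd (x - 1)"
    using assms unfolding ppd_def by (auto dest: spec[of _ 1])
  then show False
    using assms by (cases "x = 0") auto
qed

lemma ppd_dvd_diff_1:
  assumes "s \<in> ppd x m" "1 \<le> m"
  shows "m dvd s - 1"
proof (rule ccontr)
  assume not_dvd: "\<not> m dvd s - 1"
  define d where "d = gcd m (s - 1)"
  have "1 \<le> d"
    using assms(2) by (simp add: d_def Suc_le_eq)
  moreover have "d \<noteq> m"
    using not_dvd by (metis d_def gcd_dvd2)
  moreover have "d \<le> m"
    using assms(2) by (simp add: d_def)
  ultimately have "d < m"
    by linarith
  have s: "prime s" "s dvd x ^ m - 1" "\<And>i. 1 \<le> i \<Longrightarrow> i < m \<Longrightarrow> \<not> s dvd x ^ i - 1"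
    using assms(1) unfolding ppd_def by auto
  have "x \<noteq> 0"
    using s(3)[of 1] \<open>1 \<le> d\<close> \<open>d < m\<close> by (cases "x = 0") auto
  have "\<not> s dvd x"
  proof
    assume "s dvd x"
    then have "s dvd x ^ m"
      using assms(2) by (simp add: dvd_power_iff_le dvd_trans[OF _ dvd_power])
    then have "s dvd x ^ m - (x ^ m - 1)"
      using s(2) by (rule dvd_diff_nat)
    then show False
      using s(1) \<open>x \<noteq> 0\<close> by simp
  qed
  moreover have "1 \<le> x ^ (s - 1)"
    using \<open>x \<noteq> 0\<close> by simp
  ultimately have "s dvd x ^ (s - 1) - 1"
    using fermat_theorem[OF s(1)] cong_altdef_nat by blast
  then have "s dvd x ^ d - 1"
    unfolding d_def using s(2) dvd_power_diff_1_gcd by blast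
  then show False
    using s(3) \<open>1 \<le> d\<close> \<open>d < m\<close> by blast
qed

lemma ppd_subset_ppd_power:
  assumes "coprime p n"
  shows "ppd x n \<subseteq> ppd (x ^ p) n"
proof
  fix s
  assume s: "s \<in> ppd x n"
  have "x ^ n - 1 dvd (x ^ p) ^ n - 1"
    unfolding power_mult[symmetric] by (rule power_diff_1_dvd) simp
  then have "s dvd (x ^ p) ^ n - 1"
    using s unfolding ppd_def by (blast intro: dvd_trans)
  moreover have "\<not> s dvd (x ^ p) ^ i - 1" if "1 \<le> i" "i < n" for i
  proof
    assume "s dvd (x ^ p) ^ i - 1"
    then have "s dvd x ^ (i * p) - 1"
      by (metis power_mult mult.commute)
    then have "s dvd x ^ gcd (i * p) n - 1"
      using s by (intro dvd_power_diff_1_gcd) (auto simp: ppd_def)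
    moreover have "gcd (i * p) n = gcd i n"
      using assms by (simp add: gcd_mult_left_right_cancel coprime_commute)
    moreover have "1 \<le> gcd i n" "gcd i n < n"
      using that by (auto simp: Suc_le_eq intro: le_less_trans[OF gcd_le1_nat])
    ultimately show False
      using s unfolding ppd_def by auto
  qed
  ultimately show "s \<in> ppd (x ^ p) n"
    using s unfolding ppd_def by blast
qed

lemma ppd_power_prime_power:
  assumes "prime n" "r \<in> ppd (x ^ (n ^ j)) n"
  shows "r \<in> ppd x (n ^ Suc j)"
proof -
  have r: "prime r" "r dvd x ^ (n ^ Suc j) - 1" "\<not> r dvd x ^ (n ^ j) - 1"
    using assms prime_gt_1_nat[OF assms(1)]
    by (auto simp: ppd_prime_iff power_mult[symmetric] mult.commute)
  have "\<not> r dvd x ^ i - 1" if "1 \<le> i" "i < n ^ Suc j" for i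
  proof
    assume "r dvd x ^ i - 1"
    then have "r dvd x ^ gcd i (n ^ Suc j) - 1"
      using r(2) by (rule dvd_power_diff_1_gcd)
    moreover obtain k where k: "k \<le> Suc j" "gcd i (n ^ Suc j) = n ^ k"
      using divides_primepow_nat[OF assms(1)] by (meson gcd_dvd2)
    moreover have "k \<noteq> Suc j"
      using k that gcd_le1_nat[of i "n ^ Suc j"] by auto
    ultimately have "k \<le> j" "r dvd x ^ (n ^ k) - 1"
      by auto
    then have "r dvd x ^ (n ^ j) - 1"
      using power_diff_1_dvd[OF le_imp_power_dvd] dvd_trans by blast
    then show False
      using r(3) by contradiction
  qed
  then show ?thesis
    using r unfolding ppd_def by blast
qed

lemma prime_dvd_geometric_sum:
  assumes "prime n" "0 < x" "prime s" "s dvd (\<Sum>i<n. x ^ i)"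
  shows "s = n \<or> s \<in> ppd x n"
proof (cases "s dvd x - 1")
  case True
  then have "[x = 1] (mod s)"
    using assms(2) cong_altdef_nat[of 1 x s] by simp
  then have "[(\<Sum>i<n. x ^ i) = n] (mod s)"
    by (rule geometric_sum_cong)
  then have "s dvd n"
    using assms(4) cong_dvd_iff by blast
  then show ?thesis
    using assms(1,3) primes_dvd_imp_eq by blast
next
  case False
  have "s dvd x ^ n - 1"
    unfolding power_diff_1_eq_nat using assms(4) by (rule dvd_mult)
  then show ?thesis
    using False assms(1,3) by (simp add: ppd_prime_iff)
qed

lemma prime_dvd_geometric_sum_self:
  assumes "prime n" "0 < x" "n dvd (\<Sum>i<n. x ^ i)"
  shows "[x = 1] (mod n)"
proof -
  have "n dvd x ^ n - 1"
    unfolding power_diff_1_eq_nat using assms(3) by (rule dvd_mult)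
  moreover have "1 \<le> x ^ n"
    using assms(2) by simp
  ultimately have "[x ^ n = 1] (mod n)"
    using cong_altdef_nat by blast
  moreover have "[x ^ n = x] (mod n)"
    using cong_power_prime_power_self[OF assms(1), of x 1] by simp
  ultimately show ?thesis
    by (metis cong_sym cong_trans)
qed

lemma prime_square_not_dvd_geometric_sum_self:
  assumes "prime n" "odd n" "0 < x"
  shows "\<not> n^2 dvd (\<Sum>i<n. x ^ i)"
proof
  assume sq: "n^2 dvd (\<Sum>i<n. x ^ i)"
  then have "n dvd (\<Sum>i<n. x ^ i)"
    by (simp add: power2_eq_square dvd_mult_left)
  then have "[x = 1] (mod n)"
    using assms(1,3) prime_dvd_geometric_sum_self by blast
  then show False
    using prime_square_not_dvd_geometric_sum[OF assms(1,2)] sq by blast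
qed

lemma ppd_prime_nonempty:
  assumes "prime n" "odd n" "2 \<le> x"
  shows "ppd x n \<noteq> {}"
proof
  assume no_ppd: "ppd x n = {}"
  have "1 < n"
    using assms(1) by (rule prime_gt_1_nat)
  have "(\<Sum>i<n. 1) < (\<Sum>i<n. x ^ i)"
  proof (rule sum_strict_mono_ex1)
    show "\<exists>i\<in>{..<n}. 1 < x ^ i"
      using \<open>1 < n\<close> assms(3) by (intro bexI[of _ 1]) auto
  qed (use assms(3) in auto)
  then have "n < (\<Sum>i<n. x ^ i)"
    by simp
  moreover have "(\<Sum>i<n. x ^ i) dvd n"
  proof (rule dvd_prime_of_prime_divisors[OF assms(1)])
    show "0 < (\<Sum>i<n. x ^ i)"
      using \<open>1 < n\<close> assms(3) by (simp add: geometric_sum_pos)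
    show "s = n" if "prime s" "s dvd (\<Sum>i<n. x ^ i)" for s
      using prime_dvd_geometric_sum[OF assms(1) _ that] no_ppd assms(3) by simp
    show "\<not> n^2 dvd (\<Sum>i<n. x ^ i)"
      using assms by (simp add: prime_square_not_dvd_geometric_sum_self)
  qed
  ultimately show False
    using \<open>1 < n\<close> by (simp add: nat_dvd_not_less)
qed

lemma geometric_sum_unique_ppd:
  assumes "prime n" "odd n" "0 < x" "ppd x n = {r}"
  obtains a M where "(\<Sum>i<n. x ^ i) = r ^ a * M" "M dvd n"
proof -
  let ?N = "\<Sum>i<n. x ^ i"
  have "prime r"
    using assms(4) by (auto simp: ppd_def)
  have "?N \<noteq> 0"
    using geometric_sum_pos[OF assms(3) prime_gt_0_nat[OF assms(1)]] by (rule gr_implies_not0)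
  moreover have "\<not> is_unit r"
    using \<open>prime r\<close> not_prime_unit by blast
  ultimately obtain M where M: "?N = r ^ multiplicity r ?N * M" "\<not> r dvd M"
    by (rule multiplicity_decompose')
  have "M dvd n"
  proof (rule dvd_prime_of_prime_divisors[OF assms(1)])
    show "0 < M"
      using M(1) \<open>?N \<noteq> 0\<close> by (intro gr0I) auto
    show "s = n" if "prime s" "s dvd M" for s
    proof -
      have "s dvd ?N"
        using that(2) by (subst M(1)) (rule dvd_mult)
      then have "s = n \<or> s = r"
        using prime_dvd_geometric_sum[OF assms(1,3) that(1)] assms(4) by blast
      then show ?thesis
        using M(2) that(2) by blast
    qed
    show "\<not> n^2 dvd M"
    proof
      assume "n^2 dvd M"
      then have "n^2 dvd ?N"
        by (subst M(1)) (rule dvd_mult)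
      then show False
        using prime_square_not_dvd_geometric_sum_self[OF assms(1-3)] by contradiction
    qed
  qed
  then show thesis
    using that M(1) by blast
qed

section \<open>The exponent is a power of n\<close>

lemma double_less_two_power_pred: "5 \<le> (n::nat) \<Longrightarrow> 2 * n < 2 ^ (n - 1)"
proof (induction n rule: nat_induct_at_least)
  case (Suc n)
  then have "2 ^ (Suc n - 1) = 2 * (2::nat) ^ (n - 1)"
    by (cases n) auto
  then show ?case
    using Suc by simp
qed simp

lemma less_two_power_exponent_product:
  assumes "5 \<le> (n::nat)" "2 \<le> p" "odd e" "e \<le> p"
  shows "2 * e * n < 2 ^ ((p - 1) * (n - 1))"
proof (cases "p = 2")
  case True
  then have "e = 1"
    using assms(3,4) by presburger
  then show ?thesis
    using True double_less_two_power_pred[OF assms(1)] by simp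
next
  case False
  then have "3 \<le> p"
    using assms(2) by simp
  then obtain a where p: "p = 3 + a"
    using le_Suc_ex by blast
  obtain b where n: "n = 5 + b"
    using assms(1) le_Suc_ex by blast
  have "p - 1 < 2 ^ (p - 1)"
    by (rule less_exp)
  then have "p \<le> 2 ^ (p - 1)"
    using assms(2) by linarith
  then have "2 * e * n \<le> 2 ^ (p - 1) * (2 * n)"
    using assms(4) by (simp add: mult.commute mult_le_mono)
  also have "\<dots> < 2 ^ (p - 1) * 2 ^ (n - 1)"
    using double_less_two_power_pred[OF assms(1)] by simp
  also have "\<dots> = 2 ^ ((p - 1) + (n - 1))"
    by (simp add: power_add)
  also have "\<dots> \<le> 2 ^ ((p - 1) * (n - 1))"
    by (rule power_increasing) (simp_all add: p n algebra_simps)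
  finally show ?thesis .
qed

lemma geometric_sum_power_swap:
  fixes x :: nat
  shows "(\<Sum>i<p. (x ^ n) ^ i) * (\<Sum>i<n. x ^ i) = (\<Sum>i<n. (x ^ p) ^ i) * (\<Sum>i<p. x ^ i)"
    (is "?C * ?Nx = ?N * ?D")
proof (cases "x = 1")
  case False
  define X where "X = int x"
  have "(X - 1) * ((\<Sum>i<p. (X ^ n) ^ i) * (\<Sum>i<n. X ^ i)) = (X ^ n) ^ p - 1"
    by (simp add: power_diff_1_eq mult_ac)
  also have "\<dots> = (X ^ p) ^ n - 1"
    by (simp add: power_mult[symmetric] mult.commute)
  also have "\<dots> = (X - 1) * ((\<Sum>i<n. (X ^ p) ^ i) * (\<Sum>i<p. X ^ i))"
    by (simp add: power_diff_1_eq mult_ac)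
  finally have "int (?C * ?Nx) = int (?N * ?D)"
    using False by (simp add: X_def)
  then show ?thesis
    by (simp only: of_nat_eq_iff)
qed simp

lemma prime_power_dvd_gcd_mult:
  assumes "prime (r::nat)" "\<not> r^2 dvd c" "r ^ a dvd c * m"
  shows "r ^ a dvd gcd r c * m"
proof (cases "r dvd c")
  case True
  then obtain c' where c: "c = r * c'" ..
  then have "\<not> r dvd c'"
    using assms(2) by (auto simp: power2_eq_square)
  then have "coprime (r ^ a) c'"
    using prime_imp_coprime[OF assms(1)] by simp
  moreover have "r ^ a dvd c' * (r * m)"
    using assms(3) by (simp add: c mult_ac)
  ultimately show ?thesis
    using True by (simp add: coprime_dvd_mult_right_iff gcd_nat.absorb1)
next
  case False
  then have "coprime (r ^ a) c"
    using prime_imp_coprime[OF assms(1)] by simp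
  then show ?thesis
    using assms(3) False prime_imp_coprime[OF assms(1)] by (simp add: coprime_dvd_mult_right_iff)
qed

lemma geometric_sum_power_gt:
  assumes "5 \<le> n" "2 \<le> p" "2 \<le> u" "odd e" "e \<le> p"
  shows "e * n * (\<Sum>i<n. u ^ i) < (\<Sum>i<n. (u ^ p) ^ i)"
proof -
  have "0 < e"
    using assms(4) by (intro gr0I) simp
  then have "e * n * (\<Sum>i<n. u ^ i) < e * n * (2 * u ^ (n - 1))"
    using geometric_sum_less[OF assms(3)] assms(1) by simp
  also have "\<dots> = (2 * e * n) * u ^ (n - 1)"
    by (simp add: mult_ac)
  also have "\<dots> < 2 ^ ((p - 1) * (n - 1)) * u ^ (n - 1)"
    using less_two_power_exponent_product[OF assms(1,2,4,5)] assms(3) by simp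
  also have "\<dots> \<le> u ^ ((p - 1) * (n - 1)) * u ^ (n - 1)"
    using assms(3) by (simp add: power_mono)
  also have "(p - 1) * (n - 1) + (n - 1) = p * (n - 1)"
    using assms(2) by (cases p) auto
  then have "u ^ ((p - 1) * (n - 1)) * u ^ (n - 1) = (u ^ p) ^ (n - 1)"
    by (simp add: power_add[symmetric] power_mult[symmetric])
  also have "\<dots> \<le> (\<Sum>i<n. (u ^ p) ^ i)"
    using assms(1) by (intro member_le_sum) auto
  finally show ?thesis .
qed

lemma ppd_eq_of_ppd_power_eq:
  assumes "prime n" "odd n" "2 \<le> u" "coprime p n" "ppd (u ^ p) n = {r}"
  shows "ppd u n = {r}"
proof -
  have "ppd u n \<subseteq> {r}"
    using ppd_subset_ppd_power[OF assms(4)] assms(5) by blast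
  moreover have "ppd u n \<noteq> {}"
    using ppd_prime_nonempty[OF assms(1-3)] .
  ultimately show ?thesis
    by blast
qed

lemma ppd_power_ne_singleton:
  assumes "prime n" "5 \<le> n" "prime p" "p \<noteq> n" "2 \<le> u"
  shows "ppd (u ^ p) n \<noteq> {r}"
proof
  assume ppd_r: "ppd (u ^ p) n = {r}"
  let ?N = "\<Sum>i<n. (u ^ p) ^ i" and ?Nu = "\<Sum>i<n. u ^ i"
  let ?C = "\<Sum>i<p. (u ^ n) ^ i" and ?D = "\<Sum>i<p. u ^ i"
  have "odd n"
    using assms(1,2) by (simp add: prime_odd_nat)
  have "coprime p n"
    using assms(1,3,4) by (simp add: primes_coprime)
  then have "r \<in> ppd u n"
    using ppd_eq_of_ppd_power_eq[OF assms(1) \<open>odd n\<close> assms(5) _ ppd_r] by blast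
  then have "prime r" "r \<noteq> 2" "r dvd u ^ n - 1"
    using two_notin_ppd[of n u] assms(2) unfolding ppd_def by auto
  then have r: "prime r" "odd r" "[u ^ n = 1] (mod r)"
    using assms(5) prime_ge_2_nat[of r] cong_altdef_nat[of 1 "u ^ n" r]
    by (auto simp: prime_odd_nat)
  have "0 < u ^ p"
    using assms(5) by simp
  then obtain a M where N: "?N = r ^ a * M" "M dvd n"
    using geometric_sum_unique_ppd[OF assms(1) \<open>odd n\<close> _ ppd_r] by blast
  txt \<open>Since \<open>?N * ?D = ?C * ?Nu\<close> and \<open>?C \<equiv> p (mod r)\<close>, at most the factor \<open>gcd r p\<close> of
    \<open>r ^ a\<close> can come from \<open>?C\<close>.\<close>
  have C: "[?C = p] (mod r)"
    using r(3) by (rule geometric_sum_cong)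
  have "\<not> r^2 dvd ?C"
  proof
    assume sq: "r^2 dvd ?C"
    then have "r dvd p"
      using C by (metis cong_dvd_iff dvd_mult_left power2_eq_square)
    then have "r = p"
      using r(1) assms(3) primes_dvd_imp_eq by blast
    then show False
      using prime_square_not_dvd_geometric_sum[OF r(1,2,3)] sq by simp
  qed
  moreover have "?C * ?Nu = ?N * ?D"
    by (rule geometric_sum_power_swap)
  then have "r ^ a dvd ?C * ?Nu"
    using N(1) by simp
  ultimately have "r ^ a dvd gcd r ?C * ?Nu"
    using r(1) by (intro prime_power_dvd_gcd_mult)
  moreover have "gcd r ?C = gcd r p"
    using cong_gcd_eq[OF C] by (simp add: gcd.commute)
  ultimately have "r ^ a \<le> gcd r p * ?Nu"
    using assms(3,5) geometric_sum_pos[of u n] prime_gt_0_nat[OF assms(1)]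
    by (intro dvd_imp_le) (auto simp: prime_gt_0_nat)
  then have "?N \<le> gcd r p * n * ?Nu"
    using N dvd_imp_le[OF N(2) prime_gt_0_nat[OF assms(1)]] by (simp add: mult_le_mono mult_ac)
  moreover have "gcd r p * n * ?Nu < ?N"
    using assms(2,5) prime_ge_2_nat[OF assms(3)] prime_gt_0_nat[OF assms(3)] r(2)
    by (intro geometric_sum_power_gt) auto
  ultimately show False
    by simp
qed

lemma unique_ppd_exponent_eq_power:
  assumes "prime n" "5 \<le> n" "2 \<le> x" "0 < f" "ppd (x ^ f) n = {r}"
  shows "f = n ^ multiplicity n f"
proof (rule eq_power_multiplicity_of_prime_divisors[OF assms(1,4)])
  fix s
  assume s: "prime s" "s dvd f"
  from s(2) obtain g where f: "f = s * g" ..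
  then have "0 < g"
    using assms(4) by simp
  then have "2 \<le> x ^ g"
    using assms(3) self_le_power[of x g] by simp
  moreover have "ppd ((x ^ g) ^ s) n = {r}"
    using assms(5) by (simp add: f power_mult[symmetric] mult.commute)
  ultimately show "s = n"
    using ppd_power_ne_singleton[OF assms(1,2) s(1)] by blast
qed

section \<open>Excluding r = 2nf + 1\<close>

lemma ppd_prime_power_exponent_dvd:
  assumes "prime n" "odd n" "r \<in> ppd (x ^ (n ^ j)) n"
  shows "2 * n ^ Suc j dvd r - 1"
proof -
  have "r \<in> ppd x (n ^ Suc j)"
    using assms(1,3) by (rule ppd_power_prime_power)
  then have "n ^ Suc j dvd r - 1"
    using prime_gt_0_nat[OF assms(1)] by (intro ppd_dvd_diff_1) (simp_all add: Suc_le_eq)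
  moreover have "prime r"
    using assms(3) by (simp add: ppd_def)
  moreover have "r \<noteq> 2"
    using assms(3) two_notin_ppd prime_ge_2_nat[OF assms(1)] by blast
  ultimately have "odd r"
    using prime_ge_2_nat[of r] by (intro prime_odd_nat) simp_all
  then have "2 dvd r - 1"
    by presburger
  moreover have "coprime 2 (n ^ Suc j)"
    using assms(2) by simp
  ultimately show ?thesis
    using \<open>n ^ Suc j dvd r - 1\<close> by (simp add: divides_mult)
qed

lemma odd_power_plus_1_dvd:
  assumes "odd a"
  shows "(x::nat) + 1 dvd x ^ a + 1"
proof -
  have "[int x = -1] (mod int x + 1)"
    by (simp add: cong_iff_dvd_diff)
  then have "[int x ^ a = (-1) ^ a] (mod int x + 1)"
    by (rule cong_pow)
  then have "int x + 1 dvd int x ^ a + 1"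
    using assms by (simp add: cong_iff_dvd_diff)
  then have "int (x + 1) dvd int (x ^ a + 1)"
    by (simp add: add.commute)
  then show ?thesis
    by (simp only: of_nat_dvd_iff)
qed

lemma mersenne_ne_power:
  assumes "prime n" "5 \<le> n" "2 * n + 1 \<in> ppd 2 n"
  shows "(2::nat) ^ n - 1 \<noteq> (2 * n + 1) ^ a"
proof
  assume eq: "2 ^ n - 1 = (2 * n + 1) ^ a"
  have "odd a"
  proof
    assume "even a"
    then obtain b where "a = 2 * b" ..
    then have "[(2 * n + 1) ^ a = 1] (mod 4)"
      using cong_pow[OF odd_square_cong_1_mod_4[of "2 * n + 1"], of b] by (simp add: power_mult)
    obtain m where "n = m + 2"
      using assms(2) le_Suc_ex[of 2 n] by auto
    then have "(2::nat) ^ n = 4 * 2 ^ m"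
      by (simp add: power_add)
    moreover have "(1::nat) \<le> 2 ^ m"
      by simp
    ultimately have "(2::nat) ^ n - 1 = 4 * (2 ^ m - 1) + 3"
      by linarith
    then have "(2 * n + 1) ^ a mod 4 = 3"
      using eq[symmetric] by simp
    with \<open>[(2 * n + 1) ^ a = 1] (mod 4)\<close> show False
      by (simp add: cong_def)
  qed
  then have "2 * n + 2 dvd (2 * n + 1) ^ a + 1"
    using odd_power_plus_1_dvd[of a "2 * n + 1"] by simp
  moreover have "(2 * n + 1) ^ a + 1 = (2::nat) ^ n"
    using eq one_le_power[of "2::nat" n] by linarith
  ultimately have "2 * n + 2 dvd 2 ^ n"
    by simp
  then obtain t where t: "t \<le> n" "2 * n + 2 = 2 ^ t"
    using divides_primepow_nat[of 2] by auto
  have "t \<noteq> n"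
    using t(2) double_less_two_power_pred[OF assms(2)] assms(2) by (cases n) auto
  moreover have "t \<noteq> 0"
    using t(2) by (intro notI) simp
  ultimately have "\<not> 2 * n + 1 dvd 2 ^ t - 1"
    using assms(3) t(1) unfolding ppd_def by simp
  moreover have "2 * n + 1 = 2 ^ t - 1"
    using t(2) by simp
  ultimately show False
    by simp
qed

lemma not_prime_double_square_plus_1:
  assumes "\<not> 3 dvd n" "2 \<le> n"
  shows "\<not> prime (2 * n^2 + 1 :: nat)"
proof
  assume prime: "prime (2 * n^2 + 1)"
  have "[n = n mod 3] (mod 3)"
    by (simp add: cong_def)
  then have "[2 * n^2 + 1 = 2 * (n mod 3)^2 + 1] (mod 3)"
    by (intro cong_add cong_mult cong_pow cong_refl)
  moreover have "n mod 3 = 1 \<or> n mod 3 = 2"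
    using assms(1) by presburger
  ultimately have "3 dvd 2 * n^2 + 1"
    by (auto simp: cong_dvd_iff)
  then have "2 * n^2 + 1 = 3"
    using prime by (auto simp: prime_nat_iff)
  then show False
    using assms(2) power_mono[of 2 n 2] by simp
qed

lemma power_less_two_power_imp_less:
  assumes "(r::nat) ^ a < 2 ^ m" "2 ^ k \<le> r"
  shows "k * a < m"
proof -
  have "(2::nat) ^ (k * a) \<le> r ^ a"
    using assms(2) by (simp add: power_mult power_mono)
  then have "(2::nat) ^ (k * a) < 2 ^ m"
    using assms(1) by (rule le_less_trans)
  then show ?thesis
    by simp
qed

lemma double_power_five_less_two_power: "25 \<le> (f::nat) \<Longrightarrow> 2 * f ^ 5 < 2 ^ f"
proof (induction f rule: nat_induct_at_least)
  case (Suc f)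
  have "25 * Suc f \<le> 26 * f"
    using Suc by simp
  then have "(25 * Suc f) ^ 5 \<le> (26 * f) ^ 5"
    by (rule power_mono) simp
  then have "25 ^ 5 * Suc f ^ 5 \<le> 25 ^ 5 * (2 * f ^ 5)"
    by (simp only: power_mult_distrib) simp
  then have "Suc f ^ 5 \<le> 2 * f ^ 5"
    by simp
  then show ?case
    using Suc.IH by simp
qed simp

lemma geometric_sum_two_power_ne_power:
  assumes "5 \<le> n" "n^2 \<le> f"
  shows "(\<Sum>i<n. (2 ^ f) ^ i) \<noteq> (2 * n * f + 1) ^ a"
proof
  define r where "r = 2 * n * f + 1"
  assume "(\<Sum>i<n. (2 ^ f) ^ i) = (2 * n * f + 1) ^ a"
  then have N: "(\<Sum>i<n. (2 ^ f) ^ i) = r ^ a"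
    by (simp add: r_def)
  have "n \<le> n^2" "25 \<le> n^2"
    using assms(1) power_mono[of 5 n 2] by (simp_all add: power2_eq_square)
  then have "n \<le> f" "25 \<le> f"
    using assms(2) by linarith+
  have "2 \<le> (2::nat) ^ f"
    using \<open>25 \<le> f\<close> self_le_power[of 2 f] by simp
  have "5 * 25 \<le> n * f"
    using assms(1) \<open>25 \<le> f\<close> by (rule mult_le_mono)
  then have "2 ^ 7 \<le> r"
    by (simp add: r_def mult.assoc)
  have "2 ^ f dvd r ^ a - 1"
    using geometric_sum_dvd_diff_1[of n "2 ^ f"] assms(1) N by simp
  then have dvd: "2 ^ f dvd (r^2 - 1) * a"
    by (intro two_power_dvd_power_diff_1) (simp add: r_def)
  have "2 ^ f \<le> r ^ a"
    using N assms(1) member_le_sum[of 1 "{..<n}" "\<lambda>i. (2 ^ f :: nat) ^ i"] by simp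
  then have "0 < a"
    using \<open>2 \<le> 2 ^ f\<close> by (intro gr0I) simp
  then have "2 ^ f \<le> (r^2 - 1) * a"
    using \<open>2 ^ 7 \<le> r\<close> power_mono[of "2 ^ 7" r 2] by (intro dvd_imp_le[OF dvd]) simp
  have "r ^ a < 2 ^ (f * n)"
    using geometric_sum_less_power[OF \<open>2 \<le> 2 ^ f\<close>, of n] assms(1) N by (simp add: power_mult)
  then have "7 * a < f * n"
    using \<open>2 ^ 7 \<le> r\<close> by (rule power_less_two_power_imp_less)
  have "r^2 - 1 \<le> 8 * (n * f)^2"
    using assms(1) \<open>25 \<le> f\<close> by (simp add: r_def power2_eq_square algebra_simps)
  also have "\<dots> \<le> 8 * f ^ 3"
    using assms(2) by (simp add: power_mult_distrib power3_eq_cube power2_eq_square)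
  finally have "r^2 - 1 \<le> 8 * f ^ 3" .
  have "7 * 2 ^ f \<le> (r^2 - 1) * (7 * a)"
    using \<open>2 ^ f \<le> (r^2 - 1) * a\<close> by simp
  also have "\<dots> \<le> 8 * f ^ 3 * (7 * a)"
    using \<open>r^2 - 1 \<le> 8 * f ^ 3\<close> by (rule mult_right_mono) simp
  also have "\<dots> < 8 * f ^ 3 * (f * n)"
    using \<open>7 * a < f * n\<close> \<open>25 \<le> f\<close> by simp
  also have "\<dots> \<le> 8 * f ^ 5"
    using \<open>n \<le> f\<close> by (simp add: power_eq_if algebra_simps)
  also have "\<dots> < 4 * 2 ^ f"
    using double_power_five_less_two_power[OF \<open>25 \<le> f\<close>] by simp
  finally show False
    by simp
qed

lemma geometric_sum_eq_power_unique_ppd: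
  assumes "prime n" "odd n" "0 < x" "\<not> [x = 1] (mod n)" "ppd x n = {r}"
  obtains a where "(\<Sum>i<n. x ^ i) = r ^ a"
proof -
  obtain a M where N: "(\<Sum>i<n. x ^ i) = r ^ a * M" "M dvd n"
    using geometric_sum_unique_ppd[OF assms(1-3,5)] by blast
  have "\<not> n dvd (\<Sum>i<n. x ^ i)"
    using prime_dvd_geometric_sum_self[OF assms(1,3)] assms(4) by blast
  moreover have "M = 1 \<or> M = n"
    using N(2) assms(1) by (simp add: prime_nat_iff)
  ultimately have "M = 1"
    using N(1) by auto
  then show thesis
    using that N(1) by simp
qed

lemma unique_ppd_ne_double_product_plus_1:
  assumes "prime n" "5 \<le> n" "f = n ^ j" "ppd (2 ^ f) n = {r}"
  shows "r \<noteq> 2 * n * f + 1"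
proof
  assume r: "r = 2 * n * f + 1"
  have "odd n"
    using assms(1,2) by (simp add: prime_odd_nat)
  have "[2 ^ f = 2] (mod n)"
    using cong_power_prime_power_self[OF assms(1)] assms(3) by simp
  then have "\<not> [2 ^ f = 1] (mod n)"
    using assms(2) by (simp add: cong_def)
  then obtain a where N: "(\<Sum>i<n. (2 ^ f) ^ i) = r ^ a"
    using geometric_sum_eq_power_unique_ppd[OF assms(1) \<open>odd n\<close> _ _ assms(4)] by auto
  have "r \<in> ppd (2 ^ f) n"
    using assms(4) by simp
  consider "j = 0" | "j = 1" | "2 \<le> j"
    by linarith
  then show False
  proof cases
    case 1
    then have "(2::nat) ^ n - 1 = (2 * n + 1) ^ a"
      using N assms(3) r power_diff_1_eq_nat[of 2 n] by simp
    moreover have "2 * n + 1 \<in> ppd 2 n"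
      using \<open>r \<in> ppd (2 ^ f) n\<close> 1 assms(3) r by simp
    ultimately show False
      using mersenne_ne_power[OF assms(1,2)] by blast
  next
    case 2
    have "\<not> 3 dvd n"
      using assms(2) primes_dvd_imp_eq[OF _ assms(1), of 3] by auto
    moreover have "prime r"
      using \<open>r \<in> ppd (2 ^ f) n\<close> by (simp add: ppd_def)
    ultimately show False
      using not_prime_double_square_plus_1[of n] assms(2,3) r 2
      by (simp add: power2_eq_square mult.assoc)
  next
    case 3
    then have "n^2 \<le> f"
      using assms(3) prime_gt_0_nat[OF assms(1)] by (simp add: power_increasing)
    then show False
      using geometric_sum_two_power_ne_power[OF assms(2)] N r by blast
  qed
qed

theorem lemma2p11:
  fixes n f r :: nat
  assumes "prime n" and "n \<ge> 5" and "odd n" and "f \<ge> 1"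
    and "ppd (2 ^ f) n = {r}"
  shows "r \<ge> 4 * n * f + 1"
proof -
  define j where "j = multiplicity n f"
  have f: "f = n ^ j"
    unfolding j_def using assms(4)
    by (intro unique_ppd_exponent_eq_power[OF assms(1,2) _ _ assms(5)]) simp_all
  then have "r \<in> ppd (2 ^ (n ^ j)) n"
    using assms(5) by simp
  then have "2 * n ^ Suc j dvd r - 1"
    by (rule ppd_prime_power_exponent_dvd[OF assms(1,3)])
  then obtain k where "r - 1 = 2 * n ^ Suc j * k" ..
  then have k: "r - 1 = 2 * n * f * k"
    by (simp add: f)
  have "2 \<le> r"
    using assms(5) prime_ge_2_nat by (auto simp: ppd_def)
  have "k \<noteq> 0"
    using k \<open>2 \<le> r\<close> by (intro notI) simp
  moreover have "k \<noteq> 1"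
  proof
    assume "k = 1"
    then have "r = 2 * n * f + 1"
      using k \<open>2 \<le> r\<close> by simp
    then show False
      using unique_ppd_ne_double_product_plus_1[OF assms(1,2) f assms(5)] by contradiction
  qed
  ultimately have "2 * n * f * 2 \<le> r - 1"
    unfolding k by (intro mult_le_mono2) simp
  then show ?thesis
    using \<open>2 \<le> r\<close> by (simp add: mult.assoc)
qed

end
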